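(* Let $\gamma,\sigma:[a,b]\to V$ be continuous paths of bounded variation and let $f:(-\pi,\pi)\to\mathbb{C}$ be bounded and integrable with Fourier coefficients $\phi_k=\frac1{2\pi}\int_{-\pi}^\pi f(x)e^{-ikx}dx$, $k\in\mathbb{Z}$. (1) If $\phi_k=0$ for all $k<0$, then $K_\phi^{\gamma,\sigma}(s,t)=\frac1{2\pi}\int_{-\pi}^\pi K^{e^{-ix}\gamma,\sigma}(s,t)f(x)\,dx$. (2) Suppose $f$ is real-valued with real Fourier series $f=a_0+\sum_{k\ge1}a_k\cos(k\cdot)+\sum_{k\ge1}b_k\sin(k\cdot)$, $a_k,b_k\in\mathbb{R}$. If $\langle p,q\rangle_\phi:=\sum_{k\ge0}a_k\langle p_k,q_k\rangle_k$ and $K_\phi^{\gamma,\sigma}(s,t):=\langle S(\gamma)_{a,s},S(\sigma)_{a,t}\rangle_\phi$, then \[ K_\phi^{\gamma,\sigma}(s,t)=\frac1\pi\int_{-\pi}^\pi\mathcal{R}K_x^{\gamma,\sigma}(s,t)f(x)\,dx-a_0, \] where $\mathcal{R}K_x^{\gamma,\sigma}(s,t)=\operatorname{Re}K^{e^{ix}\gamma,\sigma}(s,t)$.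
   Context: $V$ is a finite-dimensional real inner product space, $\langle\cdot,\cdot\rangle_k$ the induced Hilbert–Schmidt inner product on $V^{\otimes k}$. Signature: $S(\gamma)^0=1$, $S(\gamma)^k_{s,t}=\int_{s<u_1<\dots<u_k<t}d\gamma_{u_1}\otimes\cdots\otimes d\gamma_{u_k}$; $p_k$ is the degree-$k$ component of $p$. Write $c_k(s,t)=\langle S(\gamma)^k_{a,s},S(\sigma)^k_{a,t}\rangle_k$. In (1), $K_\phi^{\gamma,\sigma}(s,t)=\sum_{k\in\mathbb{Z}}\phi_kc_{|k|}(s,t)$. For $w\in\mathbb{C}$, $K^{w\gamma,\sigma}(s,t):=\sum_{k\ge0}w^kc_k(s,t)$. *)

theory Defs
  imports "HOL-Analysis.Analysis"
begin

definition tagged_partition_of :: "real \<Rightarrow> real \<Rightarrow> nat \<Rightarrow> (nat \<Rightarrow> real) \<Rightarrow> (nat \<Rightarrow> real) \<Rightarrow> bool" where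
  "tagged_partition_of a b n x xi \<longleftrightarrow>
     x 0 = a \<and> x n = b \<and> (\<forall>i<n. x i \<le> xi i \<and> xi i \<le> x (Suc i))"

definition bounded_variation_on :: "real \<Rightarrow> real \<Rightarrow> (real \<Rightarrow> 'v::real_normed_vector) \<Rightarrow> bool" where
  "bounded_variation_on a b g \<longleftrightarrow>
     (\<exists>B. \<forall>n x. x 0 = a \<and> x n = b \<and> (\<forall>i<n. x i \<le> x (Suc i)) \<longrightarrow>
        (\<Sum>i<n. norm (g (x (Suc i)) - g (x i))) \<le> B)"

definition has_RS_integral :: "(real \<Rightarrow> real) \<Rightarrow> (real \<Rightarrow> real) \<Rightarrow> real \<Rightarrow> real \<Rightarrow> real \<Rightarrow> bool" where
  "has_RS_integral f g a b I \<longleftrightarrow>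
     (\<forall>\<epsilon>>0. \<exists>\<delta>>0. \<forall>n x xi. tagged_partition_of a b n x xi \<and> (\<forall>i<n. x (Suc i) - x i < \<delta>) \<longrightarrow>
        \<bar>(\<Sum>i<n. f (xi i) * (g (x (Suc i)) - g (x i))) - I\<bar> < \<epsilon>)"

definition RS_integral :: "(real \<Rightarrow> real) \<Rightarrow> (real \<Rightarrow> real) \<Rightarrow> real \<Rightarrow> real \<Rightarrow> real" where
  "RS_integral f g a b = (THE I. has_RS_integral f g a b I)"

text \<open>Signature coefficients: sig_rev \<gamma> a t w is the coefficient of the degree-|w| signature
  S(\<gamma>)_{a,t} at the basis tensor e_{w_k} \<otimes> ... \<otimes> e_{w_1} (word w read in reverse), i.e.
  the last letter of the (reversed) word is integrated last.\<close>
fun sig_rev :: "(real \<Rightarrow> 'v::euclidean_space) \<Rightarrow> real \<Rightarrow> real \<Rightarrow> 'v list \<Rightarrow> real" where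
  "sig_rev \<gamma> a t [] = 1"
| "sig_rev \<gamma> a t (e # w) = RS_integral (\<lambda>u. sig_rev \<gamma> a u w) (\<lambda>u. \<gamma> u \<bullet> e) a t"

text \<open>Coefficient of S(\<gamma>)^k_{a,t} at e_{i_1} \<otimes> ... \<otimes> e_{i_k} for the word w = [e_{i_1},...,e_{i_k}]:
  \<integral>_{a<u_1<...<u_k<t} d\<gamma>^{i_1}_{u_1} ... d\<gamma>^{i_k}_{u_k}.\<close>
definition sig_coeff :: "(real \<Rightarrow> 'v::euclidean_space) \<Rightarrow> real \<Rightarrow> real \<Rightarrow> 'v list \<Rightarrow> real" where
  "sig_coeff \<gamma> a t w = sig_rev \<gamma> a t (rev w)"

text \<open>Words of length k in the orthonormal basis of V (basis of V^{\<otimes>k}).\<close>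
definition words :: "nat \<Rightarrow> 'v::euclidean_space list set" where
  "words k = {w. set w \<subseteq> Basis \<and> length w = k}"

text \<open>c_k(s,t) = <S(\<gamma>)^k_{a,s}, S(\<sigma>)^k_{a,t}>_k (Hilbert--Schmidt inner product, computed in the
  orthonormal product basis).\<close>
definition sig_ip :: "(real \<Rightarrow> 'v::euclidean_space) \<Rightarrow> (real \<Rightarrow> 'v) \<Rightarrow> real \<Rightarrow> nat \<Rightarrow> real \<Rightarrow> real \<Rightarrow> real" where
  "sig_ip \<gamma> \<sigma> a k s t = (\<Sum>w\<in>words k. sig_coeff \<gamma> a s w * sig_coeff \<sigma> a t w)"

definition fourier_coeff :: "(real \<Rightarrow> complex) \<Rightarrow> int \<Rightarrow> complex" where
  "fourier_coeff f k = integral {-pi<..<pi} (\<lambda>x. f x * cis (- (of_int k * x))) / (2 * pi)"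

definition K_phi :: "(int \<Rightarrow> complex) \<Rightarrow> (real \<Rightarrow> 'v::euclidean_space) \<Rightarrow> (real \<Rightarrow> 'v) \<Rightarrow> real \<Rightarrow> real \<Rightarrow> real \<Rightarrow> complex" where
  "K_phi \<phi> \<gamma> \<sigma> a s t = (\<Sum>\<^sub>\<infinity>k\<in>(UNIV::int set). \<phi> k * of_real (sig_ip \<gamma> \<sigma> a (nat \<bar>k\<bar>) s t))"

definition K_scaled :: "complex \<Rightarrow> (real \<Rightarrow> 'v::euclidean_space) \<Rightarrow> (real \<Rightarrow> 'v) \<Rightarrow> real \<Rightarrow> real \<Rightarrow> real \<Rightarrow> complex" where
  "K_scaled w \<gamma> \<sigma> a s t = (\<Sum>k. w ^ k * of_real (sig_ip \<gamma> \<sigma> a k s t))"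

definition fourier_cos :: "(real \<Rightarrow> real) \<Rightarrow> nat \<Rightarrow> real" where
  "fourier_cos f k = (if k = 0 then integral {-pi<..<pi} f / (2 * pi)
                      else integral {-pi<..<pi} (\<lambda>x. f x * cos (real k * x)) / pi)"

definition fourier_sin :: "(real \<Rightarrow> real) \<Rightarrow> nat \<Rightarrow> real" where
  "fourier_sin f k = integral {-pi<..<pi} (\<lambda>x. f x * sin (real k * x)) / pi"

definition K_phi_real :: "(nat \<Rightarrow> real) \<Rightarrow> (real \<Rightarrow> 'v::euclidean_space) \<Rightarrow> (real \<Rightarrow> 'v) \<Rightarrow> real \<Rightarrow> real \<Rightarrow> real \<Rightarrow> real" where
  "K_phi_real ak \<gamma> \<sigma> a s t = (\<Sum>k. ak k * sig_ip \<gamma> \<sigma> a k s t)"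

end

theory Submission
  imports Defs
begin

text \<open>The signature coefficients are iterated Riemann--Stieltjes integrals. Such integrals of
  uniformly continuous integrands against paths of bounded variation exist (Cauchy criterion
  via common refinements of partitions), and by induction on the word length a coefficient of
  degree k is a uniformly continuous function of t bounded by V(t)^k/k!, V(t) being the
  variation of the path on [a, t]. Hence |c_k(s, t)| \<le> C^k/k!, so the power series
  K^{w\<gamma>,\<sigma>} = \<Sum> w^k c_k converges absolutely and uniformly on the unit circle, and may be
  integrated termwise against f by dominated convergence. The k-th term then contributes
  2\<pi> \<phi>_k c_k, respectively \<pi> a_k c_k for the cosine series, except that the constant term
  contributes 2\<pi> a_0 c_0 = 2\<pi> a_0, which explains the correction - a_0 in (2).\<close>

section \<open>Partitions and variation\<close>

definition partition_of :: "real \<Rightarrow> real \<Rightarrow> nat \<Rightarrow> (nat \<Rightarrow> real) \<Rightarrow> bool" where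
  "partition_of c d n x \<longleftrightarrow> x 0 = c \<and> x n = d \<and> (\<forall>i<n. x i \<le> x (Suc i))"

definition variation_sum :: "(real \<Rightarrow> 'v::real_normed_vector) \<Rightarrow> (nat \<Rightarrow> real) \<Rightarrow> nat \<Rightarrow> real" where
  "variation_sum g x n = (\<Sum>i<n. norm (g (x (Suc i)) - g (x i)))"

definition variation :: "(real \<Rightarrow> 'v::real_normed_vector) \<Rightarrow> real \<Rightarrow> real \<Rightarrow> real" where
  "variation g c d = Sup {variation_sum g x n | x n. partition_of c d n x}"

lemma bounded_variation_on_iff:
  "bounded_variation_on c d g \<longleftrightarrow> (\<exists>B. \<forall>n x. partition_of c d n x \<longrightarrow> variation_sum g x n \<le> B)"
  unfolding bounded_variation_on_def partition_of_def variation_sum_def by blast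

lemma bounded_variation_on_iff_bdd_above:
  "bounded_variation_on c d g \<longleftrightarrow> bdd_above {variation_sum g x n | x n. partition_of c d n x}"
  unfolding bounded_variation_on_iff bdd_above_def by blast

lemma tagged_partition_of_iff:
  "tagged_partition_of c d n x \<xi> \<longleftrightarrow> partition_of c d n x \<and> (\<forall>i<n. x i \<le> \<xi> i \<and> \<xi> i \<le> x (Suc i))"
proof -
  have "x i \<le> x (Suc i)" if "x i \<le> \<xi> i \<and> \<xi> i \<le> x (Suc i)" for i
    using that by linarith
  then show ?thesis unfolding tagged_partition_of_def partition_of_def by blast
qed

lemma partition_of_mono:
  assumes "partition_of c d n x" "i \<le> j" "j \<le> n"
  shows "x i \<le> x j"
proof (rule lift_Suc_mono_le_ivl[where N="{..<n}"])
  show "x k \<le> x (Suc k)" if "k \<in> {..<n}" for k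
    using assms(1) that unfolding partition_of_def by blast
qed (use assms in auto)

lemma partition_of_bounds:
  assumes "partition_of c d n x" "i \<le> n"
  shows "c \<le> x i" "x i \<le> d"
  using partition_of_mono[OF assms(1), of 0 i] partition_of_mono[OF assms(1), of i n] assms
  unfolding partition_of_def by auto

lemma clamp_real: "c \<le> d \<Longrightarrow> clamp c d (y::real) = min d (max c y)"
  unfolding clamp_def by (simp only: Basis_real_def) (simp add: min_def max_def)

lemma clamp_real_mono: "c \<le> d \<Longrightarrow> y \<le> z \<Longrightarrow> clamp c d y \<le> clamp c d (z::real)"
  unfolding clamp_real by (intro min.mono max.mono) auto

lemma partition_of_clamp:
  assumes "partition_of a b n x" "a \<le> c" "c \<le> d" "d \<le> b"
  shows "partition_of c d n (\<lambda>i. clamp c d (x i))"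
  unfolding partition_of_def
proof (intro conjI allI impI)
  show "clamp c d (x 0) = c" "clamp c d (x n) = d"
    using assms unfolding partition_of_def by (simp_all add: clamp_real)
  show "clamp c d (x i) \<le> clamp c d (x (Suc i))" if "i < n" for i
    using assms that unfolding partition_of_def by (intro clamp_real_mono) auto
qed

lemma variation_sum_le_increment:
  fixes g :: "real \<Rightarrow> 'v::real_normed_vector"
  assumes "partition_of c d n x"
    and "\<And>u v. c \<le> u \<Longrightarrow> u \<le> v \<Longrightarrow> v \<le> d \<Longrightarrow> norm (g v - g u) \<le> W v - W u"
  shows "variation_sum g x n \<le> W d - W c"
proof -
  have "variation_sum g x n \<le> (\<Sum>i<n. W (x (Suc i)) - W (x i))"
    unfolding variation_sum_def using assms partition_of_bounds[OF assms(1)]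
    by (intro sum_mono) (auto simp: partition_of_def)
  also have "\<dots> = W d - W c"
    using assms(1) sum_lessThan_telescope[of "\<lambda>i. W (x i)"] by (simp add: partition_of_def)
  finally show ?thesis .
qed

lemma variation_sum_split_at:
  fixes g :: "real \<Rightarrow> 'v::real_normed_vector"
  assumes "partition_of p q n x" "p \<le> c" "c \<le> q"
  shows "variation_sum g x n \<le>
    variation_sum g (\<lambda>i. clamp p c (x i)) n + variation_sum g (\<lambda>i. clamp c q (x i)) n"
proof -
  have norm_diff_split: "norm (g v - g u) \<le>
      norm (g (clamp p c v) - g (clamp p c u)) + norm (g (clamp c q v) - g (clamp c q u))"
    if "p \<le> u" "u \<le> v" "v \<le> q" for u v
  proof (cases "u < c \<and> c < v")
    case True
    then show ?thesis
      using that assms norm_triangle_ineq[of "g c - g u" "g v - g c"] by (simp add: clamp_real)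
  next
    case False
    then consider "v \<le> c" | "c \<le> u" by linarith
    then show ?thesis using that assms by cases (simp_all add: clamp_real)
  qed
  show ?thesis
    unfolding variation_sum_def sum.distrib[symmetric]
    using assms partition_of_bounds[OF assms(1)]
    by (intro sum_mono norm_diff_split) (auto simp: partition_of_def)
qed

definition join_points :: "nat \<Rightarrow> (nat \<Rightarrow> 'a) \<Rightarrow> (nat \<Rightarrow> 'a) \<Rightarrow> nat \<Rightarrow> 'a" where
  "join_points n x y k = (if k \<le> n then x k else y (k - n))"

definition join_tags :: "nat \<Rightarrow> (nat \<Rightarrow> 'a) \<Rightarrow> (nat \<Rightarrow> 'a) \<Rightarrow> nat \<Rightarrow> 'a" where
  "join_tags n \<xi> \<eta> k = (if k < n then \<xi> k else \<eta> (k - n))"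

lemma join_points_add: "x n = y 0 \<Longrightarrow> join_points n x y (n + j) = y j"
  by (cases j) (simp_all add: join_points_def)

lemma sum_join:
  assumes "x n = y 0"
  shows "(\<Sum>k<n+m. G (join_points n x y k) (join_points n x y (Suc k)) (join_tags n \<xi> \<eta> k)) =
         (\<Sum>k<n. G (x k) (x (Suc k)) (\<xi> k)) + (\<Sum>k<m. G (y k) (y (Suc k)) (\<eta> k))"
proof (induction m)
  case 0
  show ?case by (simp add: join_points_def join_tags_def)
next
  case (Suc m)
  have "join_points n x y (n + m) = y m" "join_points n x y (Suc (n + m)) = y (Suc m)"
    using join_points_add[of x n y m, OF assms] join_points_add[of x n y "Suc m", OF assms]
    by simp_all
  moreover have "join_tags n \<xi> \<eta> (n + m) = \<eta> m" by (simp add: join_tags_def)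
  ultimately show ?case
    by (simp only: add_Suc_right sum.lessThan_Suc Suc.IH add.assoc)
qed

lemma join_points_cases:
  assumes "x n = y 0" "k < n + m"
  obtains "k < n" "join_points n x y k = x k" "join_points n x y (Suc k) = x (Suc k)"
      "join_tags n \<xi> \<eta> k = \<xi> k"
    | j where "j < m" "join_points n x y k = y j" "join_points n x y (Suc k) = y (Suc j)"
      "join_tags n \<xi> \<eta> k = \<eta> j"
proof (cases "k < n")
  case True
  then show ?thesis using that(1) by (simp add: join_points_def join_tags_def)
next
  case False
  then obtain j where "k = n + j" "j < m" using assms(2) le_Suc_ex
    by (metis add_less_cancel_left not_less)
  then show ?thesis
    using that(2)[of j] join_points_add[of x n y j, OF assms(1)]
      join_points_add[of x n y "Suc j", OF assms(1)]
    by (simp add: join_tags_def)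
qed

lemma partition_of_join:
  assumes "partition_of c e n x" "partition_of e d m y"
  shows "partition_of c d (n + m) (join_points n x y)"
  unfolding partition_of_def
proof (intro conjI allI impI)
  have xy: "x n = y 0" using assms unfolding partition_of_def by simp
  show "join_points n x y 0 = c" using assms by (simp add: join_points_def partition_of_def)
  show "join_points n x y (n + m) = d"
    using join_points_add[of x n y m, OF xy] assms by (simp add: partition_of_def)
  show "join_points n x y k \<le> join_points n x y (Suc k)" if "k < n + m" for k
    using join_points_cases[of x n y k m, OF xy that] assms by cases (auto simp: partition_of_def)
qed

lemma tagged_partition_of_join:
  assumes "tagged_partition_of c e n x \<xi>" "tagged_partition_of e d m y \<eta>"
  shows "tagged_partition_of c d (n + m) (join_points n x y) (join_tags n \<xi> \<eta>)"
proof -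
  have P: "partition_of c e n x" "partition_of e d m y" using assms
    by (simp_all add: tagged_partition_of_iff)
  then have xy: "x n = y 0" unfolding partition_of_def by simp
  have "join_points n x y k \<le> join_tags n \<xi> \<eta> k \<and> join_tags n \<xi> \<eta> k \<le> join_points n x y (Suc k)"
    if "k < n + m" for k
    using join_points_cases[of x n y k m \<xi> \<eta>, OF xy that] assms
    by cases (auto simp: tagged_partition_of_iff)
  then show ?thesis using partition_of_join[OF P] by (simp add: tagged_partition_of_iff)
qed

lemma variation_sum_join:
  assumes "x n = y 0"
  shows "variation_sum g (join_points n x y) (n + m) = variation_sum g x n + variation_sum g y m"
  using sum_join[where G="\<lambda>p q r. norm (g q - g p)" and x=x and y=y and n=n and m=m
      and \<xi>="\<lambda>_. 0" and \<eta>="\<lambda>_. 0", OF assms]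
  unfolding variation_sum_def by simp

definition two_points :: "real \<Rightarrow> real \<Rightarrow> nat \<Rightarrow> real" where
  "two_points c d i = (if i = 0 then c else d)"

lemma partition_of_two_points: "c \<le> d \<Longrightarrow> partition_of c d 1 (two_points c d)"
  by (simp add: partition_of_def two_points_def)

lemma variation_sum_two_points: "variation_sum g (two_points c d) 1 = norm (g d - g c)"
  by (simp add: variation_sum_def two_points_def)

lemma bounded_variation_on_subinterval:
  fixes g :: "real \<Rightarrow> 'v::real_normed_vector"
  assumes "bounded_variation_on a b g" "a \<le> c" "c \<le> d" "d \<le> b"
  shows "bounded_variation_on c d g"
proof -
  obtain B where B: "\<And>n x. partition_of a b n x \<Longrightarrow> variation_sum g x n \<le> B"
    using assms(1) unfolding bounded_variation_on_iff by blast
  have "variation_sum g x n \<le> B" if x: "partition_of c d n x" for n x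
  proof -
    define y where "y = join_points 1 (two_points a c) x"
    have y: "partition_of a d (1 + n) y"
      unfolding y_def using assms by (intro partition_of_join[OF partition_of_two_points x])
    have "two_points a c 1 = x 0" "y (1 + n) = two_points d b 0"
      using x y unfolding partition_of_def two_points_def by simp_all
    then have "variation_sum g (join_points (1 + n) y (two_points d b)) (1 + n + 1) =
        norm (g c - g a) + variation_sum g x n + norm (g b - g d)"
      using variation_sum_join[of "two_points a c" 1 x g n]
        variation_sum_join[of y "1 + n" "two_points d b" g 1]
      unfolding y_def variation_sum_two_points by simp
    moreover have "variation_sum g (join_points (1 + n) y (two_points d b)) (1 + n + 1) \<le> B"
      using assms by (intro B partition_of_join[OF y partition_of_two_points])
    ultimately show ?thesis using norm_ge_zero[of "g c - g a"] norm_ge_zero[of "g b - g d"]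
      by linarith
  qed
  then show ?thesis unfolding bounded_variation_on_iff by blast
qed

context
  fixes g :: "real \<Rightarrow> 'v::real_normed_vector" and c d :: real
  assumes bv: "bounded_variation_on c d g" and cd: "c \<le> d"
begin

lemma variation_sum_le_variation: "partition_of c d n x \<Longrightarrow> variation_sum g x n \<le> variation g c d"
  using bv unfolding variation_def bounded_variation_on_iff_bdd_above by (intro cSup_upper) blast+

lemma variation_le:
  assumes "\<And>n x. partition_of c d n x \<Longrightarrow> variation_sum g x n \<le> M"
  shows "variation g c d \<le> M"
  unfolding variation_def using assms partition_of_two_points[OF cd] by (intro cSup_least) blast+

lemma variation_approx:
  assumes "e > 0"
  obtains n x where "partition_of c d n x" "variation g c d - e < variation_sum g x n"
  using variation_le[of "variation g c d - e"] assms by force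

lemma norm_diff_le_variation: "norm (g d - g c) \<le> variation g c d"
  using variation_sum_le_variation[OF partition_of_two_points[OF cd]]
  unfolding variation_sum_two_points .

lemma variation_nonneg: "0 \<le> variation g c d"
  using norm_diff_le_variation norm_ge_zero order_trans by blast

end

lemma variation_superadditive:
  fixes g :: "real \<Rightarrow> 'v::real_normed_vector"
  assumes bv: "bounded_variation_on c d g" and "c \<le> e" "e \<le> d"
  shows "variation g c e + variation g e d \<le> variation g c d"
proof -
  have bv1: "bounded_variation_on c e g" and bv2: "bounded_variation_on e d g"
    using bounded_variation_on_subinterval[OF bv] assms by auto
  have join: "variation_sum g x n + variation_sum g y m \<le> variation g c d"
    if "partition_of c e n x" "partition_of e d m y" for n x m y
    using variation_sum_join[of x n y g m]
      variation_sum_le_variation[OF bv _ partition_of_join[OF that]]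
      that assms by (simp add: partition_of_def)
  have "variation g c e \<le> variation g c d - variation_sum g y m" if "partition_of e d m y" for m y
    using join[OF _ that] by (intro variation_le[OF bv1 assms(2)]) (simp add: algebra_simps)
  then have "variation g e d \<le> variation g c d - variation g c e"
    by (intro variation_le[OF bv2 assms(3)]) (simp add: algebra_simps)
  then show ?thesis by simp
qed

lemma sum_variation_le_variation:
  fixes g :: "real \<Rightarrow> 'v::real_normed_vector"
  assumes bv: "bounded_variation_on a b g" and x: "partition_of a b n x"
  shows "(\<Sum>i<n. variation g (x i) (x (Suc i))) \<le> variation g a b"
proof -
  have "(\<Sum>i<k. variation g (x i) (x (Suc i))) \<le> variation g a (x k)" if "k \<le> n" for k
    using that
  proof (induction k)
    case 0
    have "a \<le> b" using partition_of_bounds[OF x, of 0] by simp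
    then show ?case
      using variation_nonneg[OF bounded_variation_on_subinterval[OF bv]] x
      by (simp add: partition_of_def)
  next
    case (Suc k)
    have "a \<le> x k" "x k \<le> x (Suc k)" "x (Suc k) \<le> b"
      using Suc.prems partition_of_bounds[OF x] partition_of_mono[OF x] by auto
    then have "variation g a (x k) + variation g (x k) (x (Suc k)) \<le> variation g a (x (Suc k))"
      by (intro variation_superadditive bounded_variation_on_subinterval[OF bv]) auto
    then show ?case using Suc by simp
  qed
  from this[OF order_refl] show ?thesis using x by (simp add: partition_of_def)
qed

lemma norm_diff_le_variation_diff:
  fixes g :: "real \<Rightarrow> 'v::real_normed_vector"
  assumes bv: "bounded_variation_on a b g" and "a \<le> x" "x \<le> y" "y \<le> b"
  shows "norm (g y - g x) \<le> variation g a y - variation g a x"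
proof -
  have "norm (g y - g x) \<le> variation g x y"
    using assms by (intro norm_diff_le_variation bounded_variation_on_subinterval[OF bv]) auto
  moreover have "variation g a x + variation g x y \<le> variation g a y"
    using assms by (intro variation_superadditive bounded_variation_on_subinterval[OF bv]) auto
  ultimately show ?thesis by linarith
qed

lemma variation_mono:
  fixes g :: "real \<Rightarrow> 'v::real_normed_vector"
  assumes "bounded_variation_on a b g" "a \<le> t" "t \<le> t'" "t' \<le> b"
  shows "variation g a t \<le> variation g a t'"
  using norm_diff_le_variation_diff[OF assms] norm_ge_zero[of "g t' - g t"] by linarith

lemma variation_sum_le_clamp_middle:
  fixes g :: "real \<Rightarrow> 'v::real_normed_vector"
  assumes bv: "bounded_variation_on a b g" and P: "partition_of a b n P"
    and tt: "a \<le> t" "t \<le> t'" "t' \<le> b"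
  shows "variation_sum g P n \<le>
    variation g a t + variation_sum g (\<lambda>i. clamp t t' (clamp t b (P i))) n + variation g t' b"
proof -
  define Q where "Q i = clamp t b (P i)" for i
  have Q: "partition_of t b n Q" unfolding Q_def using tt by (intro partition_of_clamp[OF P]) auto
  have "variation_sum g P n \<le> variation_sum g (\<lambda>i. clamp a t (P i)) n + variation_sum g Q n"
    unfolding Q_def using tt by (intro variation_sum_split_at[OF P]) auto
  moreover have "variation_sum g Q n \<le>
      variation_sum g (\<lambda>i. clamp t t' (Q i)) n + variation_sum g (\<lambda>i. clamp t' b (Q i)) n"
    using tt by (intro variation_sum_split_at[OF Q]) auto
  moreover have "variation_sum g (\<lambda>i. clamp a t (P i)) n \<le> variation g a t"
    using tt by (intro variation_sum_le_variation bounded_variation_on_subinterval[OF bv]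
        partition_of_clamp[OF P]) auto
  moreover have "variation_sum g (\<lambda>i. clamp t' b (Q i)) n \<le> variation g t' b"
    using tt by (intro variation_sum_le_variation bounded_variation_on_subinterval[OF bv]
        partition_of_clamp[OF Q]) auto
  ultimately show ?thesis unfolding Q_def by linarith
qed

text \<open>A partition almost realising the total variation, clamped to [t, t'], has short steps,
  on which the uniformly continuous path moves little.\<close>

lemma variation_increment_small:
  fixes g :: "real \<Rightarrow> 'v::real_normed_vector"
  assumes bv: "bounded_variation_on a b g" and ab: "a \<le> b"
    and cont: "continuous_on {a..b} g" and e: "e > 0"
  obtains \<delta> where "\<delta> > 0"
    "\<And>t t'. a \<le> t \<Longrightarrow> t \<le> t' \<Longrightarrow> t' \<le> b \<Longrightarrow> t' - t < \<delta> \<Longrightarrow> variation g a t' - variation g a t < e"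
proof -
  obtain n P where P: "partition_of a b n P" "variation g a b - e/2 < variation_sum g P n"
    using variation_approx[OF bv ab, of "e/2"] e by auto
  define \<epsilon> where "\<epsilon> = e / (2 * (n + 1))"
  have "\<epsilon> > 0" using e by (simp add: \<epsilon>_def)
  then obtain \<delta> where \<delta>: "\<delta> > 0"
    "\<And>x y. x \<in> {a..b} \<Longrightarrow> y \<in> {a..b} \<Longrightarrow> dist y x < \<delta> \<Longrightarrow> dist (g y) (g x) < \<epsilon>"
    using compact_uniformly_continuous[OF cont compact_Icc] unfolding uniformly_continuous_on_def
    by metis
  have "variation g a t' - variation g a t < e"
    if tt: "a \<le> t" "t \<le> t'" "t' \<le> b" "t' - t < \<delta>" for t t'
  proof -
    let ?Q = "\<lambda>i. clamp t t' (clamp t b (P i))"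
    have "variation_sum g ?Q n \<le> real n * \<epsilon>"
      unfolding variation_sum_def
    proof (rule order_trans[OF sum_bounded_above[where K=\<epsilon>]])
      fix i
      have "t \<le> clamp t t' y \<and> clamp t t' y \<le> t'" for y using tt by (simp add: clamp_real)
      from this[of "clamp t b (P i)"] this[of "clamp t b (P (Suc i))"]
      have "dist (g (?Q (Suc i))) (g (?Q i)) < \<epsilon>"
        using tt by (intro \<delta>(2)) (auto simp: dist_real_def)
      then show "norm (g (?Q (Suc i)) - g (?Q i)) \<le> \<epsilon>"
        by (simp add: dist_norm)
    qed simp
    moreover have "real n * \<epsilon> < e / 2"
      using e by (simp add: \<epsilon>_def field_simps)
    moreover have "variation g a t' + variation g t' b \<le> variation g a b"
      using tt by (intro variation_superadditive[OF bv]) auto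
    ultimately show ?thesis
      using P(2) variation_sum_le_clamp_middle[OF bv P(1) tt(1-3)] by linarith
  qed
  with \<delta>(1) show ?thesis using that by blast
qed

lemma uniformly_continuous_on_variation:
  fixes g :: "real \<Rightarrow> 'v::real_normed_vector"
  assumes bv: "bounded_variation_on a b g" and cont: "continuous_on {a..b} g"
  shows "uniformly_continuous_on {a..b} (variation g a)"
  unfolding uniformly_continuous_on_def
proof (intro allI impI)
  fix e :: real assume e: "e > 0"
  show "\<exists>\<delta>>0. \<forall>x\<in>{a..b}. \<forall>x'\<in>{a..b}. dist x' x < \<delta> \<longrightarrow> dist (variation g a x') (variation g a x) < e"
  proof (cases "a \<le> b")
    case True
    obtain \<delta> where \<delta>: "\<delta> > 0"
      "\<And>t t'. a \<le> t \<Longrightarrow> t \<le> t' \<Longrightarrow> t' \<le> b \<Longrightarrow> t' - t < \<delta> \<Longrightarrow> variation g a t' - variation g a t < e"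
      using variation_increment_small[OF bv True cont e] by blast
    have "dist (variation g a x') (variation g a x) < e"
      if "x \<in> {a..b}" "x' \<in> {a..b}" "dist x' x < \<delta>" for x x'
      using that \<delta>(2)[of x x'] \<delta>(2)[of x' x] variation_mono[OF bv, of x x']
        variation_mono[OF bv, of x' x]
      by (cases "x \<le> x'") (auto simp: dist_real_def)
    then show ?thesis using \<delta>(1) by blast
  qed (auto intro: exI[of _ 1])
qed

section \<open>Riemann--Stieltjes sums\<close>

definition stieltjes_sum ::
    "(real \<Rightarrow> real) \<Rightarrow> (real \<Rightarrow> real) \<Rightarrow> (nat \<Rightarrow> real) \<Rightarrow> (nat \<Rightarrow> real) \<Rightarrow> nat \<Rightarrow> real" where
  "stieltjes_sum F h x \<xi> n = (\<Sum>i<n. F (\<xi> i) * (h (x (Suc i)) - h (x i)))"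

definition mesh_less :: "real \<Rightarrow> nat \<Rightarrow> (nat \<Rightarrow> real) \<Rightarrow> bool" where
  "mesh_less \<delta> n x \<longleftrightarrow> (\<forall>i<n. x (Suc i) - x i < \<delta>)"

lemma has_RS_integral_iff:
  "has_RS_integral F h a b I \<longleftrightarrow>
    (\<forall>\<epsilon>>0. \<exists>\<delta>>0. \<forall>n x \<xi>. tagged_partition_of a b n x \<xi> \<longrightarrow> mesh_less \<delta> n x \<longrightarrow>
       \<bar>stieltjes_sum F h x \<xi> n - I\<bar> < \<epsilon>)"
  unfolding has_RS_integral_def stieltjes_sum_def mesh_less_def by (simp only: imp_conjL)

lemma stieltjes_sum_join:
  assumes "x n = y 0"
  shows "stieltjes_sum F h (join_points n x y) (join_tags n \<xi> \<eta>) (n + m) =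
    stieltjes_sum F h x \<xi> n + stieltjes_sum F h y \<eta> m"
  using sum_join[where G="\<lambda>p q r. F r * (h q - h p)" and x=x and y=y and n=n and m=m, OF assms]
  unfolding stieltjes_sum_def .

lemma mesh_less_join:
  assumes "mesh_less \<delta> n x" "mesh_less \<delta> m y" "x n = y 0"
  shows "mesh_less \<delta> (n + m) (join_points n x y)"
  unfolding mesh_less_def
proof (intro allI impI)
  fix k assume "k < n + m"
  from join_points_cases[of x n y k m, OF assms(3) this]
  show "join_points n x y (Suc k) - join_points n x y k < \<delta>"
    using assms(1,2) by cases (auto simp: mesh_less_def)
qed

lemma abs_stieltjes_sum_le:
  assumes "\<And>i. i < n \<Longrightarrow> \<bar>F (\<xi> i)\<bar> \<le> M"
  shows "\<bar>stieltjes_sum F h x \<xi> n\<bar> \<le> M * variation_sum h x n"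
proof -
  have "\<bar>stieltjes_sum F h x \<xi> n\<bar> \<le> (\<Sum>i<n. \<bar>F (\<xi> i)\<bar> * \<bar>h (x (Suc i)) - h (x i)\<bar>)"
    unfolding stieltjes_sum_def abs_mult[symmetric] by (rule sum_abs)
  also have "\<dots> \<le> (\<Sum>i<n. M * \<bar>h (x (Suc i)) - h (x i)\<bar>)"
    using assms by (intro sum_mono mult_right_mono) auto
  finally show ?thesis by (simp add: variation_sum_def sum_distrib_left)
qed

text \<open>The increment of h over [x i, x (i+1)] \<inter> [y j, y (j+1)]; these increments refine both
  partitions at once.\<close>

definition overlap_increment ::
    "(real \<Rightarrow> real) \<Rightarrow> (nat \<Rightarrow> real) \<Rightarrow> (nat \<Rightarrow> real) \<Rightarrow> nat \<Rightarrow> nat \<Rightarrow> real" where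
  "overlap_increment h x y i j =
    h (clamp (x i) (x (Suc i)) (y (Suc j))) - h (clamp (x i) (x (Suc i)) (y j))"

lemma sum_clamp_telescope:
  fixes x :: "nat \<Rightarrow> real" and h :: "real \<Rightarrow> real"
  assumes "\<forall>i<n. x i \<le> x (Suc i)"
  shows "(\<Sum>i<n. h (clamp (x i) (x (Suc i)) z) - h (x i)) = h (clamp (x 0) (x n) z) - h (x 0)"
  using assms
proof (induction n)
  case 0
  then show ?case by (simp add: clamp_real)
next
  case (Suc n)
  have "x 0 \<le> x n" "x n \<le> x (Suc n)"
    using Suc.prems partition_of_mono[of "x 0" "x n" n x 0 n] by (auto simp: partition_of_def)
  then have "h (clamp (x 0) (x n) z) - h (x n) + h (clamp (x n) (x (Suc n)) z) =
      h (clamp (x 0) (x (Suc n)) z)"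
    by (cases "z \<le> x n") (simp_all add: clamp_real)
  then show ?case using Suc by simp
qed

lemma sum_overlap_increment_right:
  assumes x: "partition_of a b n x" and y: "partition_of a b m y" and i: "i < n"
  shows "(\<Sum>j<m. overlap_increment h x y i j) = h (x (Suc i)) - h (x i)"
proof -
  have "a \<le> x i" "x i \<le> x (Suc i)" "x (Suc i) \<le> b"
    using i partition_of_bounds[OF x] partition_of_mono[OF x] by auto
  then show ?thesis
    using y sum_lessThan_telescope[of "\<lambda>j. h (clamp (x i) (x (Suc i)) (y j))" m]
    unfolding overlap_increment_def by (simp add: partition_of_def clamp_real)
qed

lemma sum_overlap_increment_left:
  assumes x: "partition_of a b n x" and y: "partition_of a b m y" and j: "j < m"
  shows "(\<Sum>i<n. overlap_increment h x y i j) = h (y (Suc j)) - h (y j)"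
proof -
  have "a \<le> y j" "y j \<le> b" "a \<le> y (Suc j)" "y (Suc j) \<le> b"
    using j partition_of_bounds[OF y] by auto
  moreover have "(\<Sum>i<n. overlap_increment h x y i j) =
      (\<Sum>i<n. h (clamp (x i) (x (Suc i)) (y (Suc j))) - h (x i)) -
      (\<Sum>i<n. h (clamp (x i) (x (Suc i)) (y j)) - h (x i))"
    unfolding overlap_increment_def sum_subtractf[symmetric] by simp
  ultimately show ?thesis
    using x sum_clamp_telescope[of n x h "y (Suc j)"] sum_clamp_telescope[of n x h "y j"]
    by (simp add: partition_of_def clamp_real)
qed

lemma overlap_increment_eq_0:
  assumes "x i \<le> x (Suc i)" "y (Suc j) \<le> x i \<or> x (Suc i) \<le> y j" "y j \<le> y (Suc j)"
  shows "overlap_increment h x y i j = 0"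
  using assms by (auto simp: overlap_increment_def clamp_real)

lemma sum_abs_overlap_increment_le:
  assumes bv: "bounded_variation_on a b h" and x: "partition_of a b n x"
    and y: "partition_of a b m y"
  shows "(\<Sum>i<n. \<Sum>j<m. \<bar>overlap_increment h x y i j\<bar>) \<le> variation h a b"
proof -
  have "(\<Sum>j<m. \<bar>overlap_increment h x y i j\<bar>) \<le> variation h (x i) (x (Suc i))" if i: "i < n" for i
  proof -
    have "a \<le> x i" "x i \<le> x (Suc i)" "x (Suc i) \<le> b"
      using i partition_of_bounds[OF x] partition_of_mono[OF x] by auto
    then have "variation_sum h (\<lambda>j. clamp (x i) (x (Suc i)) (y j)) m \<le> variation h (x i) (x (Suc i))"
      by (intro variation_sum_le_variation bounded_variation_on_subinterval[OF bv]
          partition_of_clamp[OF y])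
    then show ?thesis by (simp add: variation_sum_def overlap_increment_def)
  qed
  then have "(\<Sum>i<n. \<Sum>j<m. \<bar>overlap_increment h x y i j\<bar>) \<le> (\<Sum>i<n. variation h (x i) (x (Suc i)))"
    by (intro sum_mono) auto
  also have "\<dots> \<le> variation h a b" by (rule sum_variation_le_variation[OF bv x])
  finally show ?thesis .
qed

lemma stieltjes_sum_diff_eq_overlap:
  assumes x: "partition_of a b n x" and y: "partition_of a b m y"
  shows "stieltjes_sum F h x \<xi> n - stieltjes_sum F h y \<eta> m =
    (\<Sum>i<n. \<Sum>j<m. (F (\<xi> i) - F (\<eta> j)) * overlap_increment h x y i j)"
proof -
  let ?d = "overlap_increment h x y"
  have "stieltjes_sum F h x \<xi> n = (\<Sum>i<n. \<Sum>j<m. F (\<xi> i) * ?d i j)"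
    unfolding stieltjes_sum_def
    by (intro sum.cong) (simp_all add: sum_overlap_increment_right[OF x y] sum_distrib_left[symmetric])
  moreover have "stieltjes_sum F h y \<eta> m = (\<Sum>j<m. \<Sum>i<n. F (\<eta> j) * ?d i j)"
    unfolding stieltjes_sum_def
    by (intro sum.cong) (simp_all add: sum_overlap_increment_left[OF x y] sum_distrib_left[symmetric])
  moreover have "(\<Sum>j<m. \<Sum>i<n. F (\<eta> j) * ?d i j) = (\<Sum>i<n. \<Sum>j<m. F (\<eta> j) * ?d i j)"
    by (rule sum.swap)
  ultimately show ?thesis by (simp add: sum_subtractf left_diff_distrib)
qed

lemma abs_stieltjes_sum_diff_le:
  assumes P: "tagged_partition_of a b n x \<xi>" and Q: "tagged_partition_of a b m y \<eta>"
    and fine: "mesh_less \<delta> n x" "mesh_less \<delta> m y" and bv: "bounded_variation_on a b h"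
    and osc: "\<And>u v. u \<in> {a..b} \<Longrightarrow> v \<in> {a..b} \<Longrightarrow> \<bar>u - v\<bar> < 2 * \<delta> \<Longrightarrow> \<bar>F u - F v\<bar> \<le> \<epsilon>"
    and "\<epsilon> \<ge> 0"
  shows "\<bar>stieltjes_sum F h x \<xi> n - stieltjes_sum F h y \<eta> m\<bar> \<le> \<epsilon> * variation h a b"
proof -
  let ?d = "overlap_increment h x y"
  have x: "partition_of a b n x" and y: "partition_of a b m y"
    using P Q by (simp_all add: tagged_partition_of_iff)
  have summand: "\<bar>(F (\<xi> i) - F (\<eta> j)) * ?d i j\<bar> \<le> \<epsilon> * \<bar>?d i j\<bar>" if i: "i < n" and j: "j < m" for i j
  proof (cases "y (Suc j) \<le> x i \<or> x (Suc i) \<le> y j")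
    case True
    have "x i \<le> x (Suc i)" "y j \<le> y (Suc j)"
      using i j x y by (simp_all add: partition_of_def)
    then show ?thesis using True by (simp add: overlap_increment_eq_0)
  next
    case False
    have "x i \<le> \<xi> i" "\<xi> i \<le> x (Suc i)" "y j \<le> \<eta> j" "\<eta> j \<le> y (Suc j)"
      using P Q i j by (auto simp: tagged_partition_of_def)
    moreover have "x (Suc i) - x i < \<delta>" "y (Suc j) - y j < \<delta>"
      using fine i j by (auto simp: mesh_less_def)
    moreover have "a \<le> x i" "x (Suc i) \<le> b" "a \<le> y j" "y (Suc j) \<le> b"
      using i j partition_of_bounds[OF x] partition_of_bounds[OF y] by auto
    ultimately have "\<bar>F (\<xi> i) - F (\<eta> j)\<bar> \<le> \<epsilon>"
      using False by (intro osc) auto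
    then show ?thesis by (simp add: abs_mult mult_right_mono)
  qed
  have "\<bar>stieltjes_sum F h x \<xi> n - stieltjes_sum F h y \<eta> m\<bar> \<le>
      (\<Sum>i<n. \<Sum>j<m. \<bar>(F (\<xi> i) - F (\<eta> j)) * ?d i j\<bar>)"
    unfolding stieltjes_sum_diff_eq_overlap[OF x y]
    by (rule order_trans[OF sum_abs sum_mono]) (rule sum_abs)
  also have "\<dots> \<le> \<epsilon> * (\<Sum>i<n. \<Sum>j<m. \<bar>?d i j\<bar>)"
    unfolding sum_distrib_left by (intro sum_mono summand) auto
  also have "\<dots> \<le> \<epsilon> * variation h a b"
    using sum_abs_overlap_increment_le[OF bv x y] \<open>\<epsilon> \<ge> 0\<close> by (rule mult_left_mono)
  finally show ?thesis .
qed

definition uniform_partition :: "real \<Rightarrow> real \<Rightarrow> nat \<Rightarrow> nat \<Rightarrow> real" where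
  "uniform_partition a b N i = a + (b - a) * real i / real (Suc N)"

lemma uniform_partition_step:
  "uniform_partition a b N (Suc i) - uniform_partition a b N i = (b - a) / real (Suc N)"
proof -
  have "(b - a) * real (Suc i) - (b - a) * real i = b - a" by (simp add: algebra_simps)
  then show ?thesis
    unfolding uniform_partition_def by (simp add: diff_divide_distrib[symmetric] del: of_nat_Suc)
qed

lemma tagged_partition_of_uniform:
  assumes "a \<le> b"
  shows "tagged_partition_of a b (Suc N) (uniform_partition a b N) (uniform_partition a b N)"
proof -
  have "0 \<le> (b - a) / real (Suc N)" using assms by simp
  then have "uniform_partition a b N i \<le> uniform_partition a b N (Suc i)" for i
    using uniform_partition_step[of a b N i] by linarith
  moreover have "uniform_partition a b N (Suc N) = b"
    by (simp add: uniform_partition_def nonzero_mult_div_cancel_right del: of_nat_Suc)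
  ultimately show ?thesis by (simp add: tagged_partition_of_def uniform_partition_def)
qed

lemma eventually_mesh_less_uniform:
  assumes "\<delta> > 0"
  shows "eventually (\<lambda>N. mesh_less \<delta> (Suc N) (uniform_partition a b N)) sequentially"
proof -
  have "(\<lambda>N. (b - a) / real (Suc N)) \<longlonglongrightarrow> 0"
    using LIMSEQ_Suc[OF lim_const_over_n[of "b - a"]] by simp
  from order_tendstoD(2)[OF this assms] show ?thesis
    by eventually_elim (simp add: mesh_less_def uniform_partition_step)
qed

lemma has_RS_integral_tendsto:
  assumes I: "has_RS_integral F h a b I"
    and P: "\<And>N. tagged_partition_of a b (n N) (x N) (\<xi> N)"
    and fine: "\<And>\<delta>. \<delta> > 0 \<Longrightarrow> eventually (\<lambda>N. mesh_less \<delta> (n N) (x N)) sequentially"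
  shows "(\<lambda>N. stieltjes_sum F h (x N) (\<xi> N) (n N)) \<longlonglongrightarrow> I"
proof (rule tendstoI)
  fix e :: real assume "e > 0"
  then obtain \<delta> where "\<delta> > 0"
    and \<delta>: "\<And>n x \<xi>. tagged_partition_of a b n x \<xi> \<Longrightarrow> mesh_less \<delta> n x \<Longrightarrow>
        \<bar>stieltjes_sum F h x \<xi> n - I\<bar> < e"
    using I unfolding has_RS_integral_iff by blast
  from fine[OF \<open>\<delta> > 0\<close>]
  show "eventually (\<lambda>N. dist (stieltjes_sum F h (x N) (\<xi> N) (n N)) I < e) sequentially"
    by eventually_elim (simp add: dist_real_def \<delta>[OF P])
qed

lemma has_RS_integral_tendsto_uniform:
  assumes "a \<le> b" "has_RS_integral F h a b I"
  shows "(\<lambda>N. stieltjes_sum F h (uniform_partition a b N) (uniform_partition a b N) (Suc N)) \<longlonglongrightarrow> I"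
  by (rule has_RS_integral_tendsto[OF assms(2) tagged_partition_of_uniform[OF assms(1)]
        eventually_mesh_less_uniform])

lemma RS_integral_eqI:
  assumes "a \<le> b" "has_RS_integral F h a b I"
  shows "RS_integral F h a b = I"
  unfolding RS_integral_def
  using assms LIMSEQ_unique has_RS_integral_tendsto_uniform[OF assms(1)] by blast

lemma stieltjes_sums_cauchy:
  assumes ab: "a \<le> b" and bv: "bounded_variation_on a b h"
    and F: "uniformly_continuous_on {a..b} F" and e: "e > 0"
  obtains \<delta> where "\<delta> > 0"
    "\<And>n x \<xi> m y \<eta>. tagged_partition_of a b n x \<xi> \<Longrightarrow> tagged_partition_of a b m y \<eta> \<Longrightarrow>
      mesh_less \<delta> n x \<Longrightarrow> mesh_less \<delta> m y \<Longrightarrow>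
      \<bar>stieltjes_sum F h x \<xi> n - stieltjes_sum F h y \<eta> m\<bar> < e"
proof -
  define K where "K = variation h a b"
  have K: "K \<ge> 0" unfolding K_def by (rule variation_nonneg[OF bv ab])
  define \<epsilon> where "\<epsilon> = e / (K + 1)"
  have "\<epsilon> > 0" using e K by (simp add: \<epsilon>_def)
  then obtain d where "d > 0"
    and d: "\<And>u v. u \<in> {a..b} \<Longrightarrow> v \<in> {a..b} \<Longrightarrow> dist u v < d \<Longrightarrow> dist (F u) (F v) < \<epsilon>"
    using F unfolding uniformly_continuous_on_def by metis
  have "\<bar>stieltjes_sum F h x \<xi> n - stieltjes_sum F h y \<eta> m\<bar> < e"
    if "tagged_partition_of a b n x \<xi>" "tagged_partition_of a b m y \<eta>"
      "mesh_less (d / 2) n x" "mesh_less (d / 2) m y" for n x \<xi> m y \<eta>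
  proof -
    have "\<bar>stieltjes_sum F h x \<xi> n - stieltjes_sum F h y \<eta> m\<bar> \<le> \<epsilon> * K"
      unfolding K_def using that \<open>\<epsilon> > 0\<close> d
      by (intro abs_stieltjes_sum_diff_le[OF _ _ _ _ bv]) (auto simp: dist_real_def less_imp_le)
    also have "\<epsilon> * K < e" using e K by (simp add: \<epsilon>_def field_simps)
    finally show ?thesis .
  qed
  then show ?thesis using that[of "d / 2"] \<open>d > 0\<close> by simp
qed

lemma Cauchy_stieltjes_sum_uniform:
  assumes ab: "a \<le> b" and bv: "bounded_variation_on a b h" and F: "uniformly_continuous_on {a..b} F"
  shows "Cauchy (\<lambda>N. stieltjes_sum F h (uniform_partition a b N) (uniform_partition a b N) (Suc N))"
proof (rule metric_CauchyI)
  fix e :: real assume "e > 0"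
  then obtain \<delta> where "\<delta> > 0" and \<delta>: "\<And>n x \<xi> m y \<eta>. tagged_partition_of a b n x \<xi> \<Longrightarrow>
      tagged_partition_of a b m y \<eta> \<Longrightarrow> mesh_less \<delta> n x \<Longrightarrow> mesh_less \<delta> m y \<Longrightarrow>
      \<bar>stieltjes_sum F h x \<xi> n - stieltjes_sum F h y \<eta> m\<bar> < e"
    using stieltjes_sums_cauchy[OF ab bv F] by blast
  obtain M where "\<And>N. N \<ge> M \<Longrightarrow> mesh_less \<delta> (Suc N) (uniform_partition a b N)"
    using eventually_mesh_less_uniform[OF \<open>\<delta> > 0\<close>] unfolding eventually_sequentially by blast
  then show "\<exists>M. \<forall>m\<ge>M. \<forall>n\<ge>M. dist
      (stieltjes_sum F h (uniform_partition a b m) (uniform_partition a b m) (Suc m))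
      (stieltjes_sum F h (uniform_partition a b n) (uniform_partition a b n) (Suc n)) < e"
    using \<delta> tagged_partition_of_uniform[OF ab] unfolding dist_real_def by blast
qed

lemma has_RS_integral_exists:
  assumes ab: "a \<le> b" and bv: "bounded_variation_on a b h" and F: "uniformly_continuous_on {a..b} F"
  shows "\<exists>I. has_RS_integral F h a b I"
proof -
  define s where
    "s N = stieltjes_sum F h (uniform_partition a b N) (uniform_partition a b N) (Suc N)" for N
  have "Cauchy s" unfolding s_def by (rule Cauchy_stieltjes_sum_uniform[OF ab bv F])
  then obtain I where I: "s \<longlonglongrightarrow> I" using Cauchy_convergent_iff convergent_def by blast
  have "has_RS_integral F h a b I"
    unfolding has_RS_integral_iff
  proof (intro allI impI)
    fix e :: real assume "e > 0"
    then obtain \<delta> where "\<delta> > 0" and \<delta>: "\<And>n x \<xi> m y \<eta>. tagged_partition_of a b n x \<xi> \<Longrightarrow>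
        tagged_partition_of a b m y \<eta> \<Longrightarrow> mesh_less \<delta> n x \<Longrightarrow> mesh_less \<delta> m y \<Longrightarrow>
        \<bar>stieltjes_sum F h x \<xi> n - stieltjes_sum F h y \<eta> m\<bar> < e / 2"
      using stieltjes_sums_cauchy[OF ab bv F, of "e / 2"] by auto
    have "eventually (\<lambda>N. mesh_less \<delta> (Suc N) (uniform_partition a b N) \<and> dist (s N) I < e / 2) sequentially"
      using eventually_mesh_less_uniform[OF \<open>\<delta> > 0\<close>] tendstoD[OF I, of "e / 2"] \<open>e > 0\<close>
      by (simp add: eventually_conj)
    then obtain N where N: "mesh_less \<delta> (Suc N) (uniform_partition a b N)" "\<bar>s N - I\<bar> < e / 2"
      unfolding dist_real_def eventually_sequentially by auto
    have "\<bar>stieltjes_sum F h x \<xi> n - I\<bar> < e"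
      if "tagged_partition_of a b n x \<xi>" "mesh_less \<delta> n x" for n x \<xi>
      using \<delta>[OF that(1) tagged_partition_of_uniform[OF ab] that(2) N(1)] N(2) unfolding s_def
      by linarith
    then show "\<exists>\<delta>>0. \<forall>n x \<xi>. tagged_partition_of a b n x \<xi> \<longrightarrow> mesh_less \<delta> n x \<longrightarrow>
        \<bar>stieltjes_sum F h x \<xi> n - I\<bar> < e"
      using \<open>\<delta> > 0\<close> by blast
  qed
  then show ?thesis ..
qed

lemma power_Suc_diff_ge:
  fixes u v :: real
  assumes "0 \<le> u" "u \<le> v"
  shows "real (Suc k) * u ^ k * (v - u) \<le> v ^ Suc k - u ^ Suc k"
proof -
  have "(\<Sum>i<Suc k. u ^ k) \<le> (\<Sum>i<Suc k. u ^ (Suc k - Suc i) * v ^ i)"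
  proof (rule sum_mono)
    fix i assume "i \<in> {..<Suc k}"
    then have "u ^ k = u ^ (Suc k - Suc i) * u ^ i" by (simp add: power_add[symmetric])
    also have "\<dots> \<le> u ^ (Suc k - Suc i) * v ^ i" using assms
      by (intro mult_left_mono power_mono) auto
    finally show "u ^ k \<le> u ^ (Suc k - Suc i) * v ^ i" .
  qed
  then have "real (Suc k) * u ^ k * (v - u) \<le> (v - u) * (\<Sum>i<Suc k. u ^ (Suc k - Suc i) * v ^ i)"
    using assms by (simp add: mult_left_mono mult.commute mult.left_commute)
  also have "\<dots> = v ^ Suc k - u ^ Suc k" by (rule power_diff_sumr2[symmetric])
  finally show ?thesis .
qed

text \<open>With left-endpoint tags, each summand is dominated by an increment of W^(k+1)/(k+1)!,
  by convexity of the power function; the bound then telescopes.\<close>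

lemma abs_stieltjes_sum_left_le_power:
  fixes F h W :: "real \<Rightarrow> real"
  assumes x: "partition_of a t n x"
    and W: "\<And>u. u \<in> {a..t} \<Longrightarrow> 0 \<le> W u"
    and h: "\<And>u v. a \<le> u \<Longrightarrow> u \<le> v \<Longrightarrow> v \<le> t \<Longrightarrow> \<bar>h v - h u\<bar> \<le> W v - W u"
    and F: "\<And>u. u \<in> {a..t} \<Longrightarrow> \<bar>F u\<bar> \<le> W u ^ k / fact k"
  shows "\<bar>stieltjes_sum F h x x n\<bar> \<le> W t ^ Suc k / fact (Suc k)"
proof -
  have summand: "\<bar>F (x i) * (h (x (Suc i)) - h (x i))\<bar> \<le>
      (W (x (Suc i)) ^ Suc k - W (x i) ^ Suc k) / fact (Suc k)" if i: "i < n" for i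
  proof -
    have "a \<le> x i" "x i \<le> x (Suc i)" "x (Suc i) \<le> t"
      using i partition_of_bounds[OF x] partition_of_mono[OF x] by auto
    moreover have "0 \<le> W (x i)" "W (x i) \<le> W (x (Suc i))"
      using W h[of "x i" "x (Suc i)"] calculation by auto
    ultimately have "\<bar>F (x i) * (h (x (Suc i)) - h (x i))\<bar> \<le> W (x i) ^ k / fact k * (W (x (Suc i)) - W (x i))"
      unfolding abs_mult using F h by (intro mult_mono) auto
    also have "\<dots> = real (Suc k) * W (x i) ^ k * (W (x (Suc i)) - W (x i)) / fact (Suc k)"
      by (simp add: divide_simps)
    also have "\<dots> \<le> (W (x (Suc i)) ^ Suc k - W (x i) ^ Suc k) / fact (Suc k)"
      using \<open>0 \<le> W (x i)\<close> \<open>W (x i) \<le> W (x (Suc i))\<close>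
      by (intro divide_right_mono power_Suc_diff_ge) auto
    finally show ?thesis .
  qed
  have "\<bar>stieltjes_sum F h x x n\<bar> \<le> (\<Sum>i<n. (W (x (Suc i)) ^ Suc k - W (x i) ^ Suc k) / fact (Suc k))"
    unfolding stieltjes_sum_def by (rule order_trans[OF sum_abs sum_mono]) (use summand in auto)
  also have "\<dots> = (W t ^ Suc k - W a ^ Suc k) / fact (Suc k)"
    using x sum_lessThan_telescope[of "\<lambda>i. W (x i) ^ Suc k" n]
    by (simp add: sum_divide_distrib[symmetric] partition_of_def)
  also have "\<dots> \<le> W t ^ Suc k / fact (Suc k)"
    using W[of a] partition_of_bounds[OF x, of 0] by (simp add: divide_right_mono)
  finally show ?thesis .
qed

lemma has_RS_integral_power_bound:
  fixes F h W :: "real \<Rightarrow> real"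
  assumes "a \<le> t" "has_RS_integral F h a t I"
    and "\<And>u. u \<in> {a..t} \<Longrightarrow> 0 \<le> W u"
    and "\<And>u v. a \<le> u \<Longrightarrow> u \<le> v \<Longrightarrow> v \<le> t \<Longrightarrow> \<bar>h v - h u\<bar> \<le> W v - W u"
    and "\<And>u. u \<in> {a..t} \<Longrightarrow> \<bar>F u\<bar> \<le> W u ^ k / fact k"
  shows "\<bar>I\<bar> \<le> W t ^ Suc k / fact (Suc k)"
proof -
  have "\<bar>stieltjes_sum F h (uniform_partition a t N) (uniform_partition a t N) (Suc N)\<bar>
      \<le> W t ^ Suc k / fact (Suc k)" for N
    using tagged_partition_of_uniform[OF assms(1), of N] unfolding tagged_partition_of_iff
    by (intro abs_stieltjes_sum_left_le_power[OF _ assms(3-5)]) auto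
  then show ?thesis
    by (intro LIMSEQ_le_const2[OF tendsto_rabs[OF has_RS_integral_tendsto_uniform[OF assms(1,2)]]]) auto
qed

text \<open>Along partitions of [a, t'] through t, the Riemann sums split into a part converging
  to I and a part over [t, t'] bounded by M * L.\<close>

lemma has_RS_integral_increment_bound:
  fixes F h :: "real \<Rightarrow> real"
  assumes tt: "a \<le> t" "t \<le> t'"
    and I: "has_RS_integral F h a t I" and I': "has_RS_integral F h a t' I'"
    and M: "\<And>u. u \<in> {a..t'} \<Longrightarrow> \<bar>F u\<bar> \<le> M"
    and L: "\<And>n y. partition_of t t' n y \<Longrightarrow> variation_sum h y n \<le> L"
  shows "\<bar>I' - I\<bar> \<le> M * L"
proof -
  define x where "x = uniform_partition a t"
  define y where "y = uniform_partition t t'"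
  have x: "tagged_partition_of a t (Suc N) (x N) (x N)"
    and y: "tagged_partition_of t t' (Suc N) (y N) (y N)" for N
    unfolding x_def y_def using tt by (simp_all add: tagged_partition_of_uniform)
  have xy: "x N (Suc N) = y N 0" for N
    using x[of N] y[of N] by (simp add: tagged_partition_of_def)
  have "(\<lambda>N. stieltjes_sum F h (join_points (Suc N) (x N) (y N)) (join_tags (Suc N) (x N) (y N))
      (Suc N + Suc N)) \<longlonglongrightarrow> I'"
  proof (rule has_RS_integral_tendsto[OF I' tagged_partition_of_join[OF x y]])
    fix \<delta> :: real assume "\<delta> > 0"
    have "eventually (\<lambda>N. mesh_less \<delta> (Suc N) (x N) \<and> mesh_less \<delta> (Suc N) (y N)) sequentially"
      unfolding x_def y_def using eventually_mesh_less_uniform[OF \<open>\<delta> > 0\<close>]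
      by (intro eventually_conj)
    then show "eventually (\<lambda>N. mesh_less \<delta> (Suc N + Suc N) (join_points (Suc N) (x N) (y N))) sequentially"
      by (rule eventually_mono) (intro mesh_less_join xy, auto)
  qed
  moreover have "(\<lambda>N. stieltjes_sum F h (x N) (x N) (Suc N)) \<longlonglongrightarrow> I"
    unfolding x_def by (rule has_RS_integral_tendsto_uniform[OF tt(1) I])
  moreover have "stieltjes_sum F h (join_points (Suc N) (x N) (y N)) (join_tags (Suc N) (x N) (y N))
      (Suc N + Suc N) = stieltjes_sum F h (x N) (x N) (Suc N) + stieltjes_sum F h (y N) (y N) (Suc N)" for N
    by (rule stieltjes_sum_join[where x="x N" and y="y N", OF xy])
  ultimately have "(\<lambda>N. stieltjes_sum F h (y N) (y N) (Suc N)) \<longlonglongrightarrow> I' - I"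
    using tendsto_diff by fastforce
  then have "(\<lambda>N. \<bar>stieltjes_sum F h (y N) (y N) (Suc N)\<bar>) \<longlonglongrightarrow> \<bar>I' - I\<bar>"
    by (rule tendsto_rabs)
  moreover have "\<bar>stieltjes_sum F h (y N) (y N) (Suc N)\<bar> \<le> M * L" for N
  proof -
    have "0 \<le> M" using M[of a] tt by (auto intro: order_trans[OF abs_ge_zero])
    have yr: "y N i \<in> {a..t'}" if "i \<le> Suc N" for i
      using partition_of_bounds[of t t' "Suc N" "y N" i] y[of N] that tt
      by (auto simp: tagged_partition_of_iff)
    have "\<bar>stieltjes_sum F h (y N) (y N) (Suc N)\<bar> \<le> M * variation_sum h (y N) (Suc N)"
      using yr by (intro abs_stieltjes_sum_le M) auto
    also have "\<dots> \<le> M * L"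
      using L y[of N] \<open>0 \<le> M\<close> by (intro mult_left_mono) (auto simp: tagged_partition_of_iff)
    finally show ?thesis .
  qed
  ultimately show ?thesis by (intro LIMSEQ_le_const2) auto
qed

section \<open>Growth of the signature\<close>

lemma uniformly_continuous_on_dominated:
  fixes G :: "'a::metric_space \<Rightarrow> 'b::metric_space" and W :: "'a \<Rightarrow> 'c::metric_space"
  assumes W: "uniformly_continuous_on S W" and "0 \<le> M"
    and G: "\<And>u v. u \<in> S \<Longrightarrow> v \<in> S \<Longrightarrow> dist (G v) (G u) \<le> M * dist (W v) (W u)"
  shows "uniformly_continuous_on S G"
  unfolding uniformly_continuous_on_def
proof (intro allI impI)
  fix e :: real assume "e > 0"
  then have "e / (M + 1) > 0" using \<open>0 \<le> M\<close> by simp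
  then obtain d where "d > 0"
    and d: "\<And>u v. u \<in> S \<Longrightarrow> v \<in> S \<Longrightarrow> dist v u < d \<Longrightarrow> dist (W v) (W u) < e / (M + 1)"
    using W unfolding uniformly_continuous_on_def by metis
  have "dist (G v) (G u) < e" if "u \<in> S" "v \<in> S" "dist v u < d" for u v
  proof -
    have "dist (G v) (G u) \<le> M * dist (W v) (W u)" by (rule G[OF that(1,2)])
    also have "\<dots> \<le> M * (e / (M + 1))"
      using d[OF that] \<open>0 \<le> M\<close> by (intro mult_left_mono) auto
    also have "\<dots> < e" using \<open>0 \<le> M\<close> \<open>e > 0\<close> by (simp add: field_simps)
    finally show ?thesis .
  qed
  with \<open>d > 0\<close> show "\<exists>d>0. \<forall>u\<in>S. \<forall>v\<in>S. dist v u < d \<longrightarrow> dist (G v) (G u) < e"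
    by blast
qed

text \<open>One step of the iterated integrals that define the signature: the hypotheses on F are
  inherited by its indefinite integral, with k+1 in place of k.\<close>

context
  fixes F h W :: "real \<Rightarrow> real" and a b :: real and k :: nat
  assumes ab: "a \<le> b"
    and F_ucont: "uniformly_continuous_on {a..b} F"
    and F_bound: "\<And>u. u \<in> {a..b} \<Longrightarrow> \<bar>F u\<bar> \<le> W u ^ k / fact k"
    and W_ucont: "uniformly_continuous_on {a..b} W"
    and W_nonneg: "\<And>u. u \<in> {a..b} \<Longrightarrow> 0 \<le> W u"
    and h_dominated: "\<And>u v. a \<le> u \<Longrightarrow> u \<le> v \<Longrightarrow> v \<le> b \<Longrightarrow> \<bar>h v - h u\<bar> \<le> W v - W u"
begin

lemma variation_sum_dominated:
  assumes "a \<le> c" "d \<le> b" "partition_of c d n x"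
  shows "variation_sum h x n \<le> W d - W c"
  using assms h_dominated by (intro variation_sum_le_increment) auto

lemma has_RS_integral_indefinite:
  assumes "t \<in> {a..b}"
  shows "has_RS_integral F h a t (RS_integral F h a t)"
proof -
  have "bounded_variation_on a t h"
    unfolding bounded_variation_on_iff using assms variation_sum_dominated[of a t]
    by (intro exI[of _ "W t - W a"]) auto
  moreover have "{a..t} \<subseteq> {a..b}" using assms by auto
  then have "uniformly_continuous_on {a..t} F"
    using F_ucont unfolding uniformly_continuous_on_def by (meson subsetD)
  ultimately obtain I where "has_RS_integral F h a t I"
    using assms has_RS_integral_exists by fastforce
  with assms show ?thesis by (simp add: RS_integral_eqI)
qed

lemma abs_RS_integral_le_power:
  assumes "t \<in> {a..b}"
  shows "\<bar>RS_integral F h a t\<bar> \<le> W t ^ Suc k / fact (Suc k)"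
  using assms W_nonneg F_bound h_dominated
  by (intro has_RS_integral_power_bound[OF _ has_RS_integral_indefinite]) auto

lemma uniformly_continuous_on_RS_integral:
  "uniformly_continuous_on {a..b} (\<lambda>t. RS_integral F h a t)"
proof -
  define M where "M = W b ^ k / fact k"
  have "0 \<le> M" unfolding M_def using W_nonneg ab by simp
  have F_le_M: "\<bar>F u\<bar> \<le> M" if "u \<in> {a..b}" for u
  proof -
    have "W u \<le> W b" using h_dominated[of u b] that by auto
    then have "W u ^ k / fact k \<le> M"
      unfolding M_def using W_nonneg that by (intro divide_right_mono power_mono) auto
    then show ?thesis using F_bound[OF that] by linarith
  qed
  have lip: "\<bar>RS_integral F h a v - RS_integral F h a u\<bar> \<le> M * (W v - W u)"
    if "a \<le> u" "u \<le> v" "v \<le> b" for u v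
  proof (rule has_RS_integral_increment_bound[OF that(1,2)])
    show "has_RS_integral F h a u (RS_integral F h a u)" "has_RS_integral F h a v (RS_integral F h a v)"
      using that by (simp_all add: has_RS_integral_indefinite)
  qed (use that variation_sum_dominated[of u v] F_le_M in auto)
  have "dist (RS_integral F h a v) (RS_integral F h a u) \<le> M * dist (W v) (W u)"
    if "u \<in> {a..b}" "v \<in> {a..b}" for u v
  proof (cases "u \<le> v")
    case True
    then show ?thesis
      using that lip[of u v] mult_left_mono[OF abs_ge_self \<open>0 \<le> M\<close>, of "W v - W u"]
      by (auto simp: dist_real_def)
  next
    case False
    then show ?thesis
      using that lip[of v u] mult_left_mono[OF abs_ge_self \<open>0 \<le> M\<close>, of "W u - W v"]
      by (auto simp: dist_real_def abs_minus_commute)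
  qed
  then show ?thesis by (rule uniformly_continuous_on_dominated[OF W_ucont \<open>0 \<le> M\<close>])
qed

end

context
  fixes \<gamma> :: "real \<Rightarrow> 'v::euclidean_space" and a b :: real
  assumes ab: "a \<le> b" and cont: "continuous_on {a..b} \<gamma>" and bv: "bounded_variation_on a b \<gamma>"
begin

lemma abs_sig_rev_le_and_uniformly_continuous:
  assumes "set w \<subseteq> Basis"
  shows "(\<forall>t\<in>{a..b}. \<bar>sig_rev \<gamma> a t w\<bar> \<le> variation \<gamma> a t ^ length w / fact (length w)) \<and>
    uniformly_continuous_on {a..b} (\<lambda>t. sig_rev \<gamma> a t w)"
  using assms
proof (induction w)
  case Nil
  show ?case by (simp add: uniformly_continuous_on_const)
next
  case (Cons e w)
  have e: "e \<in> Basis"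
    and IH: "\<forall>t\<in>{a..b}. \<bar>sig_rev \<gamma> a t w\<bar> \<le> variation \<gamma> a t ^ length w / fact (length w)"
    "uniformly_continuous_on {a..b} (\<lambda>t. sig_rev \<gamma> a t w)"
    using Cons by auto
  have "\<bar>\<gamma> v \<bullet> e - \<gamma> u \<bullet> e\<bar> \<le> variation \<gamma> a v - variation \<gamma> a u"
    if "a \<le> u" "u \<le> v" "v \<le> b" for u v
    using Basis_le_norm[OF e, of "\<gamma> v - \<gamma> u"] norm_diff_le_variation_diff[OF bv that]
    by (simp add: inner_diff_left)
  moreover have "0 \<le> variation \<gamma> a u" if "u \<in> {a..b}" for u
    using that by (intro variation_nonneg bounded_variation_on_subinterval[OF bv]) auto
  moreover note W_ucont = uniformly_continuous_on_variation[OF bv cont]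
  ultimately show ?case
    using abs_RS_integral_le_power[OF ab IH(2) IH(1)[rule_format] W_ucont]
      uniformly_continuous_on_RS_integral[OF ab IH(2) IH(1)[rule_format] W_ucont]
    by simp
qed

lemma abs_sig_coeff_le:
  assumes "set w \<subseteq> Basis" "t \<in> {a..b}"
  shows "\<bar>sig_coeff \<gamma> a t w\<bar> \<le> variation \<gamma> a b ^ length w / fact (length w)"
proof -
  have "\<bar>sig_coeff \<gamma> a t w\<bar> \<le> variation \<gamma> a t ^ length w / fact (length w)"
    using abs_sig_rev_le_and_uniformly_continuous[of "rev w"] assms unfolding sig_coeff_def by auto
  also have "\<dots> \<le> variation \<gamma> a b ^ length w / fact (length w)"
  proof (intro divide_right_mono power_mono)
    show "variation \<gamma> a t \<le> variation \<gamma> a b"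
      using assms(2) by (intro variation_mono[OF bv]) auto
    show "0 \<le> variation \<gamma> a t"
      using assms(2) by (intro variation_nonneg bounded_variation_on_subinterval[OF bv]) auto
  qed simp
  finally show ?thesis .
qed

end

lemma abs_sig_ip_le:
  fixes \<gamma> \<sigma> :: "real \<Rightarrow> 'v::euclidean_space"
  assumes "continuous_on {a..b} \<gamma>" "bounded_variation_on a b \<gamma>"
    and "continuous_on {a..b} \<sigma>" "bounded_variation_on a b \<sigma>"
    and s: "s \<in> {a..b}" and t: "t \<in> {a..b}"
  shows "\<bar>sig_ip \<gamma> \<sigma> a k s t\<bar> \<le> (real DIM('v) * variation \<gamma> a b * variation \<sigma> a b) ^ k / fact k"
proof -
  have ab: "a \<le> b" using s by simp
  define A where "A = variation \<gamma> a b ^ k / fact k"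
  define B where "B = variation \<sigma> a b ^ k / fact k"
  have "0 \<le> variation \<gamma> a b" "0 \<le> variation \<sigma> a b"
    using variation_nonneg[OF assms(2) ab] variation_nonneg[OF assms(4) ab] by auto
  have "card (words k :: 'v list set) = DIM('v) ^ k"
    unfolding words_def by (rule card_lists_length_eq) simp
  have "\<bar>sig_ip \<gamma> \<sigma> a k s t\<bar> \<le> (\<Sum>w\<in>words k. \<bar>sig_coeff \<gamma> a s w\<bar> * \<bar>sig_coeff \<sigma> a t w\<bar>)"
    unfolding sig_ip_def abs_mult[symmetric] by (rule sum_abs)
  also have "\<dots> \<le> (\<Sum>w\<in>(words k :: 'v list set). A * B)"
    unfolding A_def B_def words_def
    using abs_sig_coeff_le[OF ab assms(1,2) _ s] abs_sig_coeff_le[OF ab assms(3,4) _ t]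
      \<open>0 \<le> variation \<gamma> a b\<close>
    by (intro sum_mono mult_mono) auto
  also have "\<dots> = (real DIM('v) * variation \<gamma> a b * variation \<sigma> a b) ^ k / fact k / fact k"
    using \<open>card (words k) = DIM('v) ^ k\<close> by (simp add: A_def B_def power_mult_distrib)
  also have "\<dots> \<le> (real DIM('v) * variation \<gamma> a b * variation \<sigma> a b) ^ k / fact k"
    using \<open>0 \<le> variation \<gamma> a b\<close> \<open>0 \<le> variation \<sigma> a b\<close> divide_left_mono[of 1 "fact k :: real"]
    by (simp del: divide_divide_eq_left)
  finally show ?thesis .
qed

lemma summable_abs_sig_ip:
  fixes \<gamma> \<sigma> :: "real \<Rightarrow> 'v::euclidean_space"
  assumes "continuous_on {a..b} \<gamma>" "bounded_variation_on a b \<gamma>"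
    and "continuous_on {a..b} \<sigma>" "bounded_variation_on a b \<sigma>"
    and "s \<in> {a..b}" "t \<in> {a..b}"
  shows "summable (\<lambda>k. \<bar>sig_ip \<gamma> \<sigma> a k s t\<bar>)"
proof (rule summable_comparison_test[OF _ summable_exp])
  show "\<exists>N. \<forall>k\<ge>N. norm \<bar>sig_ip \<gamma> \<sigma> a k s t\<bar> \<le>
      inverse (fact k) * (real DIM('v) * variation \<gamma> a b * variation \<sigma> a b) ^ k"
    using abs_sig_ip_le[OF assms] by (auto simp: divide_inverse mult.commute)
qed

lemma sig_ip_0:
  fixes \<gamma> \<sigma> :: "real \<Rightarrow> 'v::euclidean_space"
  shows "sig_ip \<gamma> \<sigma> a 0 s t = 1"
proof -
  have "(words 0 :: 'v list set) = {[]}" unfolding words_def by auto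
  then show ?thesis by (simp add: sig_ip_def sig_coeff_def)
qed

section \<open>Termwise integration against Fourier modes\<close>

lemma integrable_on_bounded_continuous_mult:
  fixes u f :: "real \<Rightarrow> 'a::{euclidean_space, real_normed_field}"
  assumes f: "f absolutely_integrable_on S" and S: "S \<in> sets lebesgue"
    and u: "continuous_on S u" "bounded (u ` S)"
  shows "(\<lambda>x. u x * f x) integrable_on S"
  using absolutely_integrable_bounded_measurable_product[OF bilinear_times
      continuous_imp_measurable_on_sets_lebesgue[OF u(1) S] S u(2) f]
  by (simp add: absolutely_integrable_on_def)

lemma sums_integral_series_mult:
  fixes u :: "nat \<Rightarrow> real \<Rightarrow> 'a::{euclidean_space, real_normed_field}" and f :: "real \<Rightarrow> 'a"
  assumes c: "summable (\<lambda>k. \<bar>c k\<bar>)"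
    and u: "\<And>k. continuous_on S (u k)" "\<And>k x. x \<in> S \<Longrightarrow> norm (u k x) \<le> 1"
    and f: "f absolutely_integrable_on S" and S: "S \<in> sets lebesgue"
  shows "(\<lambda>k. of_real (c k) * integral S (\<lambda>x. u k x * f x)) sums
    integral S (\<lambda>x. (\<Sum>k. of_real (c k) * u k x) * f x)"
proof -
  have ui: "(\<lambda>x. u k x * f x) integrable_on S" for k
    using u by (intro integrable_on_bounded_continuous_mult[OF f S]) (auto simp: bounded_iff)
  define fN where "fN N x = (\<Sum>k<N. of_real (c k) * u k x) * f x" for N x
  have nb: "norm (of_real (c k) * u k x) \<le> \<bar>c k\<bar>" if "x \<in> S" for k x
    using u(2)[OF that, of k] by (simp add: norm_mult mult_left_le)
  have fN_eq: "fN N x = (\<Sum>k<N. of_real (c k) * (u k x * f x))" for N x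
    unfolding fN_def by (simp add: sum_distrib_right mult.assoc)
  have fN_int: "fN N integrable_on S" for N
    unfolding fN_eq by (intro integrable_sum integrable_on_mult_right ui) auto
  have fN_integral: "integral S (fN N) = (\<Sum>k<N. of_real (c k) * integral S (\<lambda>x. u k x * f x))" for N
    unfolding fN_eq by (simp add: integral_sum integrable_on_mult_right ui)
  have bound: "norm (fN N x) \<le> (\<Sum>k. \<bar>c k\<bar>) * norm (f x)" if "x \<in> S" for N x
  proof -
    have "norm (\<Sum>k<N. of_real (c k) * u k x) \<le> (\<Sum>k<N. \<bar>c k\<bar>)"
      by (rule order_trans[OF norm_sum sum_mono]) (use nb[OF that] in auto)
    also have "\<dots> \<le> (\<Sum>k. \<bar>c k\<bar>)" by (rule sum_le_suminf[OF c]) auto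
    finally show ?thesis unfolding fN_def norm_mult by (intro mult_right_mono) auto
  qed
  have "summable (\<lambda>k. of_real (c k) * u k x)" if "x \<in> S" for x
    by (rule summable_comparison_test[OF _ c]) (use nb[OF that] in auto)
  then have "(\<lambda>N. fN N x) \<longlonglongrightarrow> (\<Sum>k. of_real (c k) * u k x) * f x" if "x \<in> S" for x
    unfolding fN_def using that by (intro tendsto_mult_right summable_LIMSEQ)
  moreover have "(\<lambda>x. (\<Sum>k. \<bar>c k\<bar>) * norm (f x)) integrable_on S"
    using f unfolding absolutely_integrable_on_def by (intro integrable_on_mult_right) auto
  ultimately have "(\<lambda>N. integral S (fN N)) \<longlonglongrightarrow> integral S (\<lambda>x. (\<Sum>k. of_real (c k) * u k x) * f x)"
    by (intro dominated_convergence(2)[OF fN_int _ bound])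
  then show ?thesis unfolding sums_def fN_integral .
qed

lemma integral_cis_power_mult:
  "integral {-pi<..<pi} (\<lambda>x. cis (- x) ^ k * f x) = 2 * pi * fourier_coeff f (int k)"
proof -
  have "(\<lambda>x. cis (- x) ^ k * f x) = (\<lambda>x. f x * cis (- (of_int (int k) * x)))"
  proof
    fix x
    have "cis (- x) ^ k = cis (- (real k * x))" by (simp only: Complex.DeMoivre mult_minus_right)
    then show "cis (- x) ^ k * f x = f x * cis (- (of_int (int k) * x))"
      by (metis mult.commute of_int_of_nat_eq)
  qed
  then show ?thesis by (simp add: fourier_coeff_def)
qed

lemma norm_fourier_coeff_le:
  assumes f: "f absolutely_integrable_on {-pi<..<pi}"
  shows "norm (fourier_coeff f k) \<le> integral {-pi<..<pi} (\<lambda>x. norm (f x)) / (2 * pi)"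
proof -
  have "norm (integral {-pi<..<pi} (\<lambda>x. f x * cis (- (of_int k * x)))) \<le>
      integral {-pi<..<pi} (\<lambda>x. norm (f x))"
    using f unfolding absolutely_integrable_on_def mult.commute[of "f _"]
    by (intro integral_norm_bound_integral integrable_on_bounded_continuous_mult[OF f])
       (auto intro!: continuous_intros simp: norm_mult bounded_iff)
  then show ?thesis by (simp add: fourier_coeff_def norm_divide divide_right_mono)
qed

lemma has_sum_fourier_coeff_power_series:
  fixes f :: "real \<Rightarrow> complex" and c :: "nat \<Rightarrow> real"
  assumes c: "summable (\<lambda>k. \<bar>c k\<bar>)" and f: "f absolutely_integrable_on {-pi<..<pi}"
    and analytic: "\<forall>k<0. fourier_coeff f k = 0"
  shows "((\<lambda>k. fourier_coeff f k * of_real (c (nat \<bar>k\<bar>))) has_sum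
    integral {-pi<..<pi} (\<lambda>x. (\<Sum>k. cis (- x) ^ k * of_real (c k)) * f x) / (2 * pi)) UNIV"
proof -
  let ?S = "{-pi<..<pi}"
  let ?I = "integral ?S (\<lambda>x. (\<Sum>k. cis (- x) ^ k * of_real (c k)) * f x) / (2 * pi)"
  have "(\<lambda>k. of_real (c k) * integral ?S (\<lambda>x. cis (- x) ^ k * f x)) sums
      integral ?S (\<lambda>x. (\<Sum>k. of_real (c k) * cis (- x) ^ k) * f x)"
    using c f by (intro sums_integral_series_mult) (auto intro!: continuous_intros simp: norm_power)
  then have "(\<lambda>k. of_real (c k) * integral ?S (\<lambda>x. cis (- x) ^ k * f x) / (2 * pi)) sums
      (integral ?S (\<lambda>x. (\<Sum>k. of_real (c k) * cis (- x) ^ k) * f x) / (2 * pi))"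
    by (rule sums_divide)
  moreover have "(\<lambda>k. of_real (c k) * integral ?S (\<lambda>x. cis (- x) ^ k * f x) / (2 * pi)) =
      (\<lambda>k. fourier_coeff f (int k) * of_real (c k))"
    by (rule ext, subst integral_cis_power_mult) (simp add: field_simps)
  moreover have "(\<lambda>x. (\<Sum>k. of_real (c k) * cis (- x) ^ k) * f x) =
      (\<lambda>x. (\<Sum>k. cis (- x) ^ k * of_real (c k)) * f x)"
    by (simp add: mult.commute)
  ultimately have sums: "(\<lambda>k. fourier_coeff f (int k) * of_real (c k)) sums ?I"
    by (simp only:)
  have "summable (\<lambda>k. norm (fourier_coeff f (int k) * of_real (c k)))"
    using norm_fourier_coeff_le[OF f]
    by (intro summable_comparison_test[OF _ summable_mult[OF c]])
       (auto simp: norm_mult intro!: exI[of _ 0] mult_right_mono)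
  then have "((\<lambda>k. fourier_coeff f (int k) * of_real (c k)) has_sum ?I) UNIV"
    using sums by (rule norm_summable_imp_has_sum)
  then have "((\<lambda>k. fourier_coeff f k * of_real (c (nat \<bar>k\<bar>))) has_sum ?I) (range int)"
    by (simp add: has_sum_reindex o_def)
  moreover have "fourier_coeff f k = 0" if "k \<notin> range int" for k :: int
    using that analytic by (metis nonneg_int_cases not_less rangeI)
  ultimately show ?thesis
    by (subst (asm) has_sum_cong_neutral[where T=UNIV]) auto
qed

lemma sums_fourier_cos_power_series:
  fixes g :: "real \<Rightarrow> real" and c :: "nat \<Rightarrow> real"
  assumes c: "summable (\<lambda>k. \<bar>c k\<bar>)" and g: "g absolutely_integrable_on {-pi<..<pi}"
  shows "(\<lambda>k. fourier_cos g k * c k) sums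
    (integral {-pi<..<pi} (\<lambda>x. Re (\<Sum>k. cis x ^ k * of_real (c k)) * g x) / pi - fourier_cos g 0 * c 0)"
proof -
  let ?S = "{-pi<..<pi}"
  have Re: "Re (\<Sum>k. cis x ^ k * of_real (c k)) = (\<Sum>k. c k * cos (real k * x))" for x
  proof -
    have "summable (\<lambda>k. cis x ^ k * of_real (c k))"
      by (rule summable_comparison_test[OF _ c]) (auto simp: norm_mult norm_power)
    from sums_Re[OF summable_sums[OF this]]
    have "(\<lambda>k. c k * cos (real k * x)) sums Re (\<Sum>k. cis x ^ k * of_real (c k))"
      by (simp add: Complex.DeMoivre mult.commute)
    then show ?thesis by (simp add: sums_iff)
  qed
  have "(\<lambda>k. c k * integral ?S (\<lambda>x. cos (real k * x) * g x)) sums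
      integral ?S (\<lambda>x. (\<Sum>k. c k * cos (real k * x)) * g x)"
    using sums_integral_series_mult[OF c _ _ g, of "\<lambda>k x. cos (real k * x)"]
    by (simp add: continuous_intros)
  then have "(\<lambda>k. c k * integral ?S (\<lambda>x. cos (real k * x) * g x) / pi -
      (if k = 0 then fourier_cos g 0 * c 0 else 0)) sums
      (integral ?S (\<lambda>x. Re (\<Sum>k. cis x ^ k * of_real (c k)) * g x) / pi - fourier_cos g 0 * c 0)"
    unfolding Re by (intro sums_diff sums_divide sums_single)
  moreover have "c k * integral ?S (\<lambda>x. cos (real k * x) * g x) / pi -
      (if k = 0 then fourier_cos g 0 * c 0 else 0) = fourier_cos g k * c k" for k
    by (cases "k = 0") (simp_all add: fourier_cos_def mult.commute)
  ultimately show ?thesis by simp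
qed

theorem mainTheorem9:
  fixes \<gamma> \<sigma> :: "real \<Rightarrow> 'v::euclidean_space"
    and f :: "real \<Rightarrow> complex"
    and a b s t :: real
  assumes "continuous_on {a..b} \<gamma>" and "bounded_variation_on a b \<gamma>"
    and "continuous_on {a..b} \<sigma>" and "bounded_variation_on a b \<sigma>"
    and "bounded (f ` {-pi<..<pi})"
    and "f absolutely_integrable_on {-pi<..<pi}"
    and "s \<in> {a..b}" and "t \<in> {a..b}"
  shows "((\<forall>k<0. fourier_coeff f k = 0) \<longrightarrow>
           K_phi (fourier_coeff f) \<gamma> \<sigma> a s t =
             integral {-pi<..<pi} (\<lambda>x. K_scaled (cis (- x)) \<gamma> \<sigma> a s t * f x) / (2 * pi)) \<and>
         ((\<forall>x\<in>{-pi<..<pi}. Im (f x) = 0) \<longrightarrow>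
           K_phi_real (fourier_cos (\<lambda>x. Re (f x))) \<gamma> \<sigma> a s t =
             integral {-pi<..<pi} (\<lambda>x. Re (K_scaled (cis x) \<gamma> \<sigma> a s t) * Re (f x)) / pi
               - fourier_cos (\<lambda>x. Re (f x)) 0)"
proof -
  define c where "c k = sig_ip \<gamma> \<sigma> a k s t" for k
  have c: "summable (\<lambda>k. \<bar>c k\<bar>)"
    unfolding c_def using assms(1-4,7,8) by (rule summable_abs_sig_ip)
  have Re_f: "(\<lambda>x. Re (f x)) absolutely_integrable_on {-pi<..<pi}"
    using absolutely_integrable_linear[OF assms(6) bounded_linear_Re] by (simp add: o_def)
  show ?thesis
  proof (intro conjI impI)
    assume "\<forall>k<0. fourier_coeff f k = 0"
    from has_sum_fourier_coeff_power_series[OF c assms(6) this]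
    show "K_phi (fourier_coeff f) \<gamma> \<sigma> a s t =
        integral {-pi<..<pi} (\<lambda>x. K_scaled (cis (- x)) \<gamma> \<sigma> a s t * f x) / (2 * pi)"
      unfolding K_phi_def K_scaled_def c_def by (rule infsumI)
  next
    from sums_fourier_cos_power_series[OF c Re_f]
    show "K_phi_real (fourier_cos (\<lambda>x. Re (f x))) \<gamma> \<sigma> a s t =
        integral {-pi<..<pi} (\<lambda>x. Re (K_scaled (cis x) \<gamma> \<sigma> a s t) * Re (f x)) / pi
          - fourier_cos (\<lambda>x. Re (f x)) 0"
      unfolding K_phi_real_def K_scaled_def c_def by (simp add: sums_iff sig_ip_0)
  qed
qed

end
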